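(* Let $w_0>0$, $\theta\in\mathbb{R}$ and $\alpha_{\max}>0$. With the inner product $\langle x,y\rangle=\frac{w_0}{2\pi}\int_{-\pi/w_0}^{\pi/w_0}x(t)y(t)\,dt$ and $\psi_1(t)=\frac{3\sqrt5}{2\pi^2}w_0^2t^2-\frac{\sqrt5}{2}$, $\psi_2(t)=\frac{\sqrt3}{\pi}w_0t$, for $\alpha\in[0,\alpha_{\max}]$ and $\phi\in[-\pi,\pi]$ let $s_{\alpha,\phi}(t)=\alpha\sin(w_0t+\phi+\theta)$, $a^*(\alpha,\phi)=\langle s_{\alpha,\phi},\psi_1\rangle$, $b^*(\alpha,\phi)=\langle s_{\alpha,\phi},\psi_2\rangle$. Then the set $\{(a^*(\alpha,\phi),b^*(\alpha,\phi)):\alpha\in[0,\alpha_{\max}],\ \phi\in[-\pi,\pi]\}$ is the filled elliptical region (ellipse together with its interior) bounded by the ellipse $\{(a^*(\alpha_{\max},\phi),b^*(\alpha_{\max},\phi)):\phi\in[-\pi,\pi]\}$, and for each fixed $\phi$ the Euclidean distance of $(a^*(\alpha,\phi),b^*(\alpha,\phi))$ from the origin (the center of this ellipse) is proportional to $\alpha$.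
   Context: $\psi_1,\psi_2$ together with $\psi_3=1$ are orthonormal for this inner product; $a^*,b^*$ are the least-squares coefficients of the signal on $\psi_1,\psi_2$. *)

theory Defs
  imports "HOL-Analysis.Analysis"
begin

definition ip :: "real \<Rightarrow> (real \<Rightarrow> real) \<Rightarrow> (real \<Rightarrow> real) \<Rightarrow> real" where
  "ip w0 x y = w0 / (2 * pi) * integral {-pi / w0 .. pi / w0} (\<lambda>t. x t * y t)"

definition psi1 :: "real \<Rightarrow> real \<Rightarrow> real" where
  "psi1 w0 t = 3 * sqrt 5 / (2 * pi^2) * w0^2 * t^2 - sqrt 5 / 2"

definition psi2 :: "real \<Rightarrow> real \<Rightarrow> real" where
  "psi2 w0 t = sqrt 3 / pi * w0 * t"

definition sig :: "real \<Rightarrow> real \<Rightarrow> real \<Rightarrow> real \<Rightarrow> real \<Rightarrow> real" where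
  "sig w0 \<theta> \<alpha> \<phi> t = \<alpha> * sin (w0 * t + \<phi> + \<theta>)"

definition astar :: "real \<Rightarrow> real \<Rightarrow> real \<Rightarrow> real \<Rightarrow> real" where
  "astar w0 \<theta> \<alpha> \<phi> = ip w0 (sig w0 \<theta> \<alpha> \<phi>) (psi1 w0)"

definition bstar :: "real \<Rightarrow> real \<Rightarrow> real \<Rightarrow> real \<Rightarrow> real" where
  "bstar w0 \<theta> \<alpha> \<phi> = ip w0 (sig w0 \<theta> \<alpha> \<phi>) (psi2 w0)"

end

theory Submission imports Defs begin

text \<open>Against the orthonormal system, the sinusoid has the coefficients
  \<open>a\<^sup>* = -(3\<surd>5/\<pi>\<^sup>2) \<alpha> sin(\<phi>+\<theta>)\<close> and \<open>b\<^sup>* = (\<surd>3/\<pi>) \<alpha> cos(\<phi>+\<theta>)\<close>, computed by integrating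
  \<open>t\<^sup>k sin(w\<^sub>0t+c)\<close> for \<open>k \<le> 2\<close> over one period. Hence \<open>(a\<^sup>*, b\<^sup>*)\<close> is \<open>\<alpha>\<close> times a point of
  the axis-parallel ellipse with semi-axes \<open>3\<surd>5/\<pi>\<^sup>2\<close> and \<open>\<surd>3/\<pi>\<close>; as \<open>\<phi>\<close> runs over a period
  it traverses that whole ellipse, and letting \<open>\<alpha>\<close> range over \<open>[0, \<alpha>max]\<close> fills it.\<close>

lemma has_integral_antiderivative:
  fixes a b :: real
  assumes "a \<le> b" and "\<And>t. (F has_real_derivative f t) (at t)"
  shows "(f has_integral F b - F a) {a..b}"
  using assms by (intro fundamental_theorem_of_calculus)
    (auto simp: has_real_derivative_iff_has_vector_derivative[symmetric] intro: has_field_derivative_at_within)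

lemma sin_has_integral_period:
  assumes "w > 0"
  shows "((\<lambda>t. sin (w*t + c)) has_integral 0) {-pi/w..pi/w}"
proof -
  have "((\<lambda>t. sin (w*t + c)) has_integral
      (- cos (w*(pi/w) + c)/w) - (- cos (w*(-pi/w) + c)/w)) {-pi/w..pi/w}"
    using assms by (intro has_integral_antiderivative) (auto intro!: derivative_eq_intros)
  then show ?thesis
    using assms by (simp add: cos_add)
qed

lemma t_sin_has_integral_period:
  assumes "w > 0"
  shows "((\<lambda>t. t * sin (w*t + c)) has_integral 2*pi * cos c / w^2) {-pi/w..pi/w}"
proof -
  define F where "F t = - (t * cos (w*t + c)/w) + sin (w*t + c)/w^2" for t
  have "((\<lambda>t. t * sin (w*t + c)) has_integral F (pi/w) - F (-pi/w)) {-pi/w..pi/w}"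
    unfolding F_def using assms
    by (intro has_integral_antiderivative)
      (auto intro!: derivative_eq_intros simp: field_simps eval_nat_numeral)
  also have "F (pi/w) - F (-pi/w) = 2*pi * cos c / w^2"
    unfolding F_def using assms by (simp add: sin_add cos_add field_simps power2_eq_square)
  finally show ?thesis .
qed

lemma t2_sin_has_integral_period:
  assumes "w > 0"
  shows "((\<lambda>t. t^2 * sin (w*t + c)) has_integral -4*pi * sin c / w^3) {-pi/w..pi/w}"
proof -
  define F where "F t = - (t^2 * cos (w*t + c)/w) + 2*t * sin (w*t + c)/w^2 + 2 * cos (w*t + c)/w^3"
    for t
  have "((\<lambda>t. t^2 * sin (w*t + c)) has_integral F (pi/w) - F (-pi/w)) {-pi/w..pi/w}"
    unfolding F_def using assms
    by (intro has_integral_antiderivative)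
      (auto intro!: derivative_eq_intros simp: field_simps eval_nat_numeral)
  also have "F (pi/w) - F (-pi/w) = -4*pi * sin c / w^3"
    unfolding F_def using assms
    by (simp add: sin_add cos_add field_simps power2_eq_square power3_eq_cube)
  finally show ?thesis .
qed

lemma astar_eq:
  assumes "w0 > 0"
  shows "astar w0 \<theta> \<alpha> \<phi> = - (3 * sqrt 5 / pi^2) * \<alpha> * sin (\<phi> + \<theta>)"
proof -
  define c1 where "c1 = \<alpha> * (3 * sqrt 5 / (2 * pi^2) * w0^2)"
  define c0 where "c0 = \<alpha> * (sqrt 5 / 2)"
  have "((\<lambda>t. c1 * (t^2 * sin (w0*t + (\<phi>+\<theta>))) - c0 * sin (w0*t + (\<phi>+\<theta>)))
      has_integral c1 * (-4*pi * sin (\<phi>+\<theta>) / w0^3) - c0 * 0) {-pi/w0..pi/w0}"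
    using assms by (intro has_integral_diff has_integral_mult_right
        t2_sin_has_integral_period sin_has_integral_period)
  moreover have "(\<lambda>t. c1 * (t^2 * sin (w0*t + (\<phi>+\<theta>))) - c0 * sin (w0*t + (\<phi>+\<theta>)))
      = (\<lambda>t. sig w0 \<theta> \<alpha> \<phi> t * psi1 w0 t)"
    by (auto simp: c1_def c0_def sig_def psi1_def algebra_simps)
  ultimately show ?thesis
    using assms unfolding astar_def ip_def c1_def
    by (simp add: integral_unique field_simps power2_eq_square power3_eq_cube)
qed

lemma bstar_eq:
  assumes "w0 > 0"
  shows "bstar w0 \<theta> \<alpha> \<phi> = (sqrt 3 / pi) * \<alpha> * cos (\<phi> + \<theta>)"
proof -
  define c where "c = \<alpha> * (sqrt 3 / pi * w0)"
  have "((\<lambda>t. c * (t * sin (w0*t + (\<phi>+\<theta>))))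
      has_integral c * (2*pi * cos (\<phi>+\<theta>) / w0^2)) {-pi/w0..pi/w0}"
    using assms by (intro has_integral_mult_right t_sin_has_integral_period)
  moreover have "(\<lambda>t. c * (t * sin (w0*t + (\<phi>+\<theta>)))) = (\<lambda>t. sig w0 \<theta> \<alpha> \<phi> t * psi2 w0 t)"
    by (auto simp: c_def sig_def psi2_def algebra_simps)
  ultimately show ?thesis
    using assms unfolding bstar_def ip_def c_def
    by (simp add: integral_unique field_simps power2_eq_square)
qed

lemma reduce_mod_2pi: "\<exists>n::int. x - 2*pi*n \<in> {-pi..pi}"
proof
  define n where "n = \<lfloor>(x + pi) / (2*pi)\<rfloor>"
  have "of_int n \<le> (x + pi) / (2*pi)" "(x + pi) / (2*pi) < of_int n + 1"
    unfolding n_def by linarith+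
  then show "x - 2*pi*n \<in> {-pi..pi}"
    by (simp add: field_simps)
qed

lemma sin_cos_attained_on_period:
  assumes "u^2 + v^2 = 1"
  obtains \<phi> where "\<phi> \<in> {-pi..pi}" "sin (\<phi> + \<theta>) = u" "cos (\<phi> + \<theta>) = v"
proof -
  obtain t where t: "v = cos t" "u = sin t"
    using sincos_total_2pi[of v u] assms by (metis add.commute)
  obtain n :: int where n: "t - \<theta> - 2*pi*n \<in> {-pi..pi}"
    using reduce_mod_2pi by blast
  have "sin (t - 2*pi*n) = u" "cos (t - 2*pi*n) = v"
    using t by (simp_all add: sin_diff cos_diff)
  then show thesis
    using n by (intro that[of "t - \<theta> - 2*pi*n"]) simp_all
qed

lemma ellipse_boundary_param:
  fixes a b \<theta> :: real
  assumes "a \<noteq> 0" "b \<noteq> 0"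
  shows "{(a * sin (\<phi> + \<theta>), b * cos (\<phi> + \<theta>)) | \<phi>. \<phi> \<in> {-pi..pi}}
    = {(x, y). (x/a)^2 + (y/b)^2 = 1}"
proof (intro set_eqI iffI)
  fix z assume "z \<in> {(a * sin (\<phi> + \<theta>), b * cos (\<phi> + \<theta>)) | \<phi>. \<phi> \<in> {-pi..pi}}"
  then show "z \<in> {(x, y). (x/a)^2 + (y/b)^2 = 1}"
    using assms by (auto simp: power_divide power_mult_distrib)
next
  fix z assume "z \<in> {(x, y). (x/a)^2 + (y/b)^2 = 1}"
  then obtain x y where z: "z = (x, y)" "(x/a)^2 + (y/b)^2 = 1"
    by auto
  then obtain \<phi> where "\<phi> \<in> {-pi..pi}" "sin (\<phi> + \<theta>) = x/a" "cos (\<phi> + \<theta>) = y/b"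
    using sin_cos_attained_on_period by metis
  then show "z \<in> {(a * sin (\<phi> + \<theta>), b * cos (\<phi> + \<theta>)) | \<phi>. \<phi> \<in> {-pi..pi}}"
    using assms z(1) by force
qed

lemma ellipse_region_param:
  fixes a b R \<theta> :: real
  assumes "a \<noteq> 0" "b \<noteq> 0" "R > 0"
  shows "{(a * \<alpha> * sin (\<phi> + \<theta>), b * \<alpha> * cos (\<phi> + \<theta>)) | \<alpha> \<phi>. \<alpha> \<in> {0..R} \<and> \<phi> \<in> {-pi..pi}}
    = {(x, y). (x/(a*R))^2 + (y/(b*R))^2 \<le> 1}"
proof (intro set_eqI iffI)
  fix z
  assume "z \<in> {(a * \<alpha> * sin (\<phi> + \<theta>), b * \<alpha> * cos (\<phi> + \<theta>)) | \<alpha> \<phi>. \<alpha> \<in> {0..R} \<and> \<phi> \<in> {-pi..pi}}"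
  then obtain \<alpha> \<phi> where \<alpha>: "\<alpha> \<in> {0..R}"
    and z: "z = (a * \<alpha> * sin (\<phi> + \<theta>), b * \<alpha> * cos (\<phi> + \<theta>))"
    by blast
  have "(a * \<alpha> * sin (\<phi> + \<theta>) / (a*R))^2 + (b * \<alpha> * cos (\<phi> + \<theta>) / (b*R))^2 = (\<alpha>/R)^2"
    using assms by (simp add: field_simps) (simp flip: distrib_left)
  also have "\<dots> \<le> 1"
    using \<alpha> assms by (simp add: power_le_one)
  finally show "z \<in> {(x, y). (x/(a*R))^2 + (y/(b*R))^2 \<le> 1}"
    using z by simp
next
  fix z assume "z \<in> {(x, y). (x/(a*R))^2 + (y/(b*R))^2 \<le> 1}"
  then obtain x y where z: "z = (x, y)" and le1: "(x/(a*R))^2 + (y/(b*R))^2 \<le> 1"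
    by auto
  define \<rho> where "\<rho> = sqrt ((x/(a*R))^2 + (y/(b*R))^2)"
  have \<rho>: "0 \<le> \<rho>" "\<rho> \<le> 1"
    using le1 by (auto simp: \<rho>_def)
  show "z \<in> {(a * \<alpha> * sin (\<phi> + \<theta>), b * \<alpha> * cos (\<phi> + \<theta>)) | \<alpha> \<phi>. \<alpha> \<in> {0..R} \<and> \<phi> \<in> {-pi..pi}}"
  proof (cases "\<rho> = 0")
    case True
    then have "x = 0" "y = 0"
      using assms by (auto simp: \<rho>_def add_nonneg_eq_0_iff)
    then show ?thesis
      using z assms by (intro CollectI exI[of _ 0] exI[of _ 0]) simp
  next
    case False
    \<comment> \<open>the point lies on the boundary of the ellipse scaled by \<open>\<rho>\<close>\<close>
    have "(x/(a*(R*\<rho>)))^2 + (y/(b*(R*\<rho>)))^2 = ((x/(a*R))^2 + (y/(b*R))^2) / \<rho>^2"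
      by (simp add: power_divide power_mult_distrib add_divide_distrib)
    also have "\<dots> = \<rho>^2 / \<rho>^2"
      by (simp add: \<rho>_def)
    finally have "(x/(a*(R*\<rho>)))^2 + (y/(b*(R*\<rho>)))^2 = 1"
      using False by simp
    then have "(x, y) \<in> {(a*(R*\<rho>) * sin (\<phi> + \<theta>), b*(R*\<rho>) * cos (\<phi> + \<theta>)) | \<phi>. \<phi> \<in> {-pi..pi}}"
      using ellipse_boundary_param[of "a*(R*\<rho>)" "b*(R*\<rho>)" \<theta>] assms False by simp
    then obtain \<phi> where "\<phi> \<in> {-pi..pi}"
        "x = a*(R*\<rho>) * sin (\<phi> + \<theta>)" "y = b*(R*\<rho>) * cos (\<phi> + \<theta>)"
      by blast
    moreover have "R*\<rho> \<in> {0..R}"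
      using \<rho> assms by (simp add: mult_left_le)
    ultimately show ?thesis
      using z by (intro CollectI exI[of _ "R*\<rho>"] exI[of _ \<phi>]) (simp add: mult.assoc)
  qed
qed

lemma norm_ellipse_point:
  fixes a b \<alpha> c :: real
  assumes "a \<noteq> 0" "b \<noteq> 0" "\<alpha> \<ge> 0"
  shows "norm (a * \<alpha> * sin c, b * \<alpha> * cos c) = sqrt ((a * sin c)^2 + (b * cos c)^2) * \<alpha>"
    and "sqrt ((a * sin c)^2 + (b * cos c)^2) > 0"
proof -
  have "norm (a * \<alpha> * sin c, b * \<alpha> * cos c) = sqrt (\<alpha>^2 * ((a * sin c)^2 + (b * cos c)^2))"
    by (simp add: norm_Pair power_mult_distrib algebra_simps)
  then show "norm (a * \<alpha> * sin c, b * \<alpha> * cos c) = sqrt ((a * sin c)^2 + (b * cos c)^2) * \<alpha>"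
    using assms(3) by (simp add: real_sqrt_mult)
  have "sin c \<noteq> 0 \<or> cos c \<noteq> 0"
    using sin_cos_squared_add[of c] by (metis power_zero_numeral add_0 zero_neq_one)
  then show "sqrt ((a * sin c)^2 + (b * cos c)^2) > 0"
    using assms by (auto simp: add_pos_nonneg add_nonneg_pos)
qed

theorem corollary2:
  fixes w0 \<theta> \<alpha>max :: real
  assumes "w0 > 0" and "\<alpha>max > 0"
  shows "(\<exists>p q r :: real. p > 0 \<and> p * r - q^2 > 0 \<and>
     {(astar w0 \<theta> \<alpha>max \<phi>, bstar w0 \<theta> \<alpha>max \<phi>) | \<phi>. \<phi> \<in> {-pi..pi}}
       = {(x, y). p * x^2 + 2 * q * x * y + r * y^2 = 1} \<and>
     {(astar w0 \<theta> \<alpha> \<phi>, bstar w0 \<theta> \<alpha> \<phi>) | \<alpha> \<phi>. \<alpha> \<in> {0..\<alpha>max} \<and> \<phi> \<in> {-pi..pi}}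
       = {(x, y). p * x^2 + 2 * q * x * y + r * y^2 \<le> 1}) \<and>
    (\<forall>\<phi> \<in> {-pi..pi}. \<exists>k > 0. \<forall>\<alpha> \<in> {0..\<alpha>max}.
       norm (astar w0 \<theta> \<alpha> \<phi>, bstar w0 \<theta> \<alpha> \<phi>) = k * \<alpha>)"
proof -
  define a where "a = - (3 * sqrt 5 / pi^2)"
  define b where "b = sqrt 3 / pi"
  have ab: "a \<noteq> 0" "b \<noteq> 0"
    by (simp_all add: a_def b_def)
  have coeffs: "(astar w0 \<theta> \<alpha> \<phi>, bstar w0 \<theta> \<alpha> \<phi>) = (a * \<alpha> * sin (\<phi> + \<theta>), b * \<alpha> * cos (\<phi> + \<theta>))"
    for \<alpha> \<phi>
    using assms(1) by (simp add: astar_eq bstar_eq a_def b_def)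
  define p where "p = 1 / (a*\<alpha>max)^2"
  define r where "r = 1 / (b*\<alpha>max)^2"
  have quadratic_form: "p * x^2 + 2 * 0 * x * y + r * y^2 = (x/(a*\<alpha>max))^2 + (y/(b*\<alpha>max))^2"
    for x y :: real
    by (simp add: p_def r_def power_divide)
  have "p > 0" "p * r - 0^2 > 0"
    using ab assms(2) by (simp_all add: p_def r_def)
  moreover have "{(astar w0 \<theta> \<alpha>max \<phi>, bstar w0 \<theta> \<alpha>max \<phi>) | \<phi>. \<phi> \<in> {-pi..pi}}
      = {(x, y). p * x^2 + 2 * 0 * x * y + r * y^2 = 1}"
    using ellipse_boundary_param[of "a*\<alpha>max" "b*\<alpha>max" \<theta>] ab assms(2)
    unfolding coeffs quadratic_form by (simp add: mult.assoc)
  moreover have "{(astar w0 \<theta> \<alpha> \<phi>, bstar w0 \<theta> \<alpha> \<phi>) | \<alpha> \<phi>. \<alpha> \<in> {0..\<alpha>max} \<and> \<phi> \<in> {-pi..pi}}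
      = {(x, y). p * x^2 + 2 * 0 * x * y + r * y^2 \<le> 1}"
    using ellipse_region_param[of a b \<alpha>max \<theta>] ab assms(2)
    unfolding coeffs quadratic_form by simp
  moreover have "\<exists>k > 0. \<forall>\<alpha> \<in> {0..\<alpha>max}. norm (astar w0 \<theta> \<alpha> \<phi>, bstar w0 \<theta> \<alpha> \<phi>) = k * \<alpha>" for \<phi>
    using norm_ellipse_point[OF ab, of _ "\<phi> + \<theta>"] unfolding coeffs
    by (intro exI[of _ "sqrt ((a * sin (\<phi> + \<theta>))^2 + (b * cos (\<phi> + \<theta>))^2)"]) auto
  ultimately show ?thesis
    by blast
qed

end
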